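(* Let $X\subset\mathbb{R}^{2n}$ be a symplectically self-polar convex body with $C^2$-smooth boundary. Let $\gamma\colon I\to\partial X$ ($I$ an interval) be a characteristic curve of $\partial X$, and suppose that $\delta=f\circ\gamma$ is also a characteristic curve of $\partial X$. Then $\gamma$ and $\delta$ are planar curves: both are contained in a two-dimensional linear subspace of $\mathbb{R}^{2n}$.
   Context: $\mathbb{R}^{2n}\cong\mathbb{C}^n$, $J$ is multiplication by $\sqrt{-1}$, $\omega(u,v)=\langle Ju,v\rangle$. For a convex body $X$ with origin in its interior, $X^\omega=\{y: \omega(x,y)\le 1\ \forall x\in X\}$; $X$ is symplectically self-polar if $X=X^\omega$. For $C^1$ boundary, $f\colon\partial X\to\partial X^\omega$ assigns to $x$ the unique $f(x)\in X^\omega$ with $\omega(x,f(x))=1$; when $X=X^\omega$, $f$ maps $\partial X$ to itself. The characteristic line of a hypersurface $\Sigma$ at $p$ is $\ker(\omega|_{T_p\Sigma})$; a characteristic curve of $\Sigma$ is a $C^1$ curve in $\Sigma$ whose velocity at each time lies in the characteristic line at the current point. *)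

theory Defs
  imports "HOL-Analysis.Analysis"
begin

text \<open>R^{2n} is identified with C^n, realised as the type complex^'n
  (a real Euclidean space of real dimension 2 CARD('n)).\<close>

definition cJ :: "complex ^ 'n \<Rightarrow> complex ^ 'n" where
  "cJ u = (\<chi> k. \<i> * u $ k)"

definition symp_form :: "complex ^ 'n \<Rightarrow> complex ^ 'n \<Rightarrow> real" where
  "symp_form u v = inner (cJ u) v"

definition symp_polar :: "(complex ^ 'n) set \<Rightarrow> (complex ^ 'n) set" where
  "symp_polar X = {y. \<forall>x\<in>X. symp_form x y \<le> 1}"

definition convex_body :: "'a::euclidean_space set \<Rightarrow> bool" where
  "convex_body X \<longleftrightarrow> compact X \<and> convex X \<and> interior X \<noteq> {}"

definition C2_boundary :: "'a::euclidean_space set \<Rightarrow> bool" where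
  "C2_boundary X \<longleftrightarrow> (\<forall>p\<in>frontier X. \<exists>U g grad G.
      open U \<and> p \<in> U \<and> X \<inter> U = {x\<in>U. g x \<le> (0::real)} \<and>
      (\<forall>x\<in>U. (g has_derivative (\<lambda>h. inner (grad x) h)) (at x)) \<and>
      (\<forall>x\<in>U. grad x \<noteq> 0) \<and>
      (\<forall>x\<in>U. (grad has_derivative blinfun_apply (G x)) (at x)) \<and>
      continuous_on U (G :: 'a \<Rightarrow> 'a \<Rightarrow>\<^sub>L 'a))"

text \<open>The map f: for x in the boundary of X, f x is the unique point of the
  symplectic polar with omega(x, f x) = 1.\<close>
definition polar_map :: "(complex ^ 'n) set \<Rightarrow> complex ^ 'n \<Rightarrow> complex ^ 'n" where
  "polar_map X x = (THE y. y \<in> symp_polar X \<and> symp_form x y = 1)"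

definition tangent_space :: "'a::real_normed_vector set \<Rightarrow> 'a \<Rightarrow> 'a set" where
  "tangent_space S p = {v. \<exists>c e. e > 0 \<and> c ` {-e<..<e} \<subseteq> S \<and> c 0 = p \<and>
      (c has_vector_derivative v) (at 0)}"

definition char_line :: "(complex ^ 'n) set \<Rightarrow> complex ^ 'n \<Rightarrow> (complex ^ 'n) set" where
  "char_line S p = {v \<in> tangent_space S p. \<forall>w\<in>tangent_space S p. symp_form v w = 0}"

definition characteristic_curve ::
  "(complex ^ 'n) set \<Rightarrow> real set \<Rightarrow> (real \<Rightarrow> complex ^ 'n) \<Rightarrow> bool" where
  "characteristic_curve S I c \<longleftrightarrow> c ` I \<subseteq> S \<and>
     (\<exists>c'. (\<forall>t\<in>I. (c has_vector_derivative c' t) (at t within I)) \<and>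
           continuous_on I c' \<and> (\<forall>t\<in>I. c' t \<in> char_line S (c t)))"

end

theory Submission
  imports Defs
begin

text \<open>At a point x of a smooth boundary the characteristic line is J applied to the normal line.
  For a symplectically self-polar body, -J f(x) is an outer normal at x and J x is an outer
  normal at f(x); hence the characteristic direction at x is f(x) and the one at f(x) is x.
  So \<gamma>' = a \<delta> and \<delta>' = b \<gamma> for continuous a, b. With A = \<gamma>(t0), B = \<delta>(t0) we have
  \<omega>(A, B) = 1, and the linear map Q z = z - \<omega>(z, B) A + \<omega>(z, A) B, whose kernel is span {A, B},
  turns (\<gamma>, \<delta>) into a solution of the same linear system with zero initial data. A Gronwall
  estimate for |Q \<gamma>|^2 + |Q \<delta>|^2 shows that it vanishes identically.\<close>

lemma cJ_nth [simp]: "cJ u $ k = \<i> * u $ k"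
  by (simp add: cJ_def)

lemma linear_cJ: "linear cJ"
  by (rule linearI) (simp_all add: cJ_def vec_eq_iff algebra_simps scaleR_conv_of_real)

lemma cJ_cJ [simp]: "cJ (cJ u) = - u"
  by (simp add: vec_eq_iff)

lemma cJ_eq_iff [simp]: "cJ u = cJ v \<longleftrightarrow> u = v"
  by (metis cJ_cJ minus_equation_iff)

lemma cJ_eq_0_iff [simp]: "cJ u = 0 \<longleftrightarrow> u = 0"
  using cJ_eq_iff[of u 0] by (simp add: linear_0[OF linear_cJ])

lemma inner_cJ_cJ [simp]: "inner (cJ u) (cJ v) = inner u v"
  by (simp add: inner_vec_def inner_complex_def add.commute)

lemma inner_cJ_left: "inner (cJ u) v = - inner u (cJ v)"
  by (simp add: inner_vec_def inner_complex_def sum_negf[symmetric] algebra_simps)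

lemma inner_uminus_cJ: "inner (- cJ y) x = symp_form x y"
  unfolding symp_form_def using inner_cJ_left[of x y] by (simp add: inner_commute)

lemma symp_form_antisym: "symp_form u v = - symp_form v u"
  unfolding symp_form_def using inner_cJ_left[of u v] by (simp add: inner_commute)

lemma symp_form_self [simp]: "symp_form u u = 0"
  using symp_form_antisym[of u u] by simp

lemma symp_form_add_left: "symp_form (u + w) v = symp_form u v + symp_form w v"
  by (simp add: symp_form_def linear_add[OF linear_cJ] inner_add_left)

lemma symp_form_scaleR_left [simp]: "symp_form (c *\<^sub>R u) v = c * symp_form u v"
  by (simp add: symp_form_def linear_scale[OF linear_cJ])

lemma symp_form_minus_right [simp]: "symp_form u (- v) = - symp_form u v"
  by (simp add: symp_form_def)

lemma symp_form_zero_right [simp]: "symp_form u 0 = 0"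
  by (simp add: symp_form_def)

lemma symp_form_cJ_self: "symp_form u (cJ u) = inner u u"
  by (simp add: symp_form_def)

section \<open>Tangent and normal vectors of the boundary\<close>

lemma tangent_space_mono: "S \<subseteq> T \<Longrightarrow> tangent_space S p \<subseteq> tangent_space T p"
  unfolding tangent_space_def by blast

lemma tangent_space_orthogonal_support:
  fixes u :: "'a::real_inner"
  assumes "w \<in> tangent_space S x" "S \<subseteq> X" "\<forall>z\<in>X. inner u z \<le> inner u x"
  shows "inner u w = 0"
proof -
  obtain c e where c: "e > 0" "c ` {-e<..<e} \<subseteq> S" "c 0 = x" "(c has_vector_derivative w) (at 0)"
    using assms(1) unfolding tangent_space_def by blast
  have "((\<lambda>s. inner u (c s)) has_real_derivative inner u w) (at 0)"
    using bounded_linear.has_vector_derivative[OF bounded_linear_inner_right c(4)]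
    by (simp add: has_real_derivative_iff_has_vector_derivative)
  moreover have "\<forall>s. \<bar>0 - s\<bar> < e \<longrightarrow> inner u (c s) \<le> inner u (c 0)"
  proof (intro allI impI)
    fix s :: real assume "\<bar>0 - s\<bar> < e"
    then have "c s \<in> X" using c(2) assms(2) by force
    then show "inner u (c s) \<le> inner u (c 0)" using assms(3) c(3) by simp
  qed
  ultimately show ?thesis
    by (rule DERIV_local_max[OF _ c(1)])
qed

lemma orthogonal_complement_subset_imp_parallel:
  fixes n a :: "'a::real_inner"
  assumes "n \<noteq> 0" "\<forall>w. inner n w = 0 \<longrightarrow> inner a w = 0"
  shows "\<exists>c. a = c *\<^sub>R n"
proof -
  define w where "w = a - (inner a n / inner n n) *\<^sub>R n"
  have "inner n w = 0"
    using assms(1) by (simp add: w_def inner_diff_right inner_commute)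
  then have "inner w w = 0"
    using assms(2) by (simp add: w_def inner_diff_left)
  then show ?thesis
    by (intro exI[of _ "inner a n / inner n n"]) (simp add: w_def)
qed

lemma first_order_expansion_normal_tangent:
  fixes g :: "'a::real_inner \<Rightarrow> real"
  assumes dg: "(g has_derivative (\<lambda>h. inner n h)) (at x)" and "inner n w = 0"
    and U: "open U" "x \<in> U" and "\<epsilon> > 0"
  shows "\<exists>d>0. \<forall>s h. \<bar>s\<bar> < d \<longrightarrow> \<bar>h\<bar> \<le> \<bar>s\<bar> \<longrightarrow> x + s *\<^sub>R w + h *\<^sub>R n \<in> U \<and>
           \<bar>g (x + s *\<^sub>R w + h *\<^sub>R n) - g x - h * inner n n\<bar> \<le> \<epsilon> * \<bar>s\<bar>"
proof -
  define L where "L = norm w + norm n + 1"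
  have L: "L > 0" by (simp add: L_def add_nonneg_pos)
  obtain d1 where d1: "d1 > 0" "\<forall>y. norm (y - x) < d1 \<longrightarrow>
      norm (g y - g x - inner n (y - x)) \<le> (\<epsilon> / L) * norm (y - x)"
    using dg[unfolded has_derivative_at_alt] \<open>\<epsilon> > 0\<close> L by (meson divide_pos_pos)
  obtain d2 where d2: "d2 > 0" "ball x d2 \<subseteq> U"
    using U open_contains_ball by blast
  show ?thesis
  proof (intro exI[of _ "min d1 d2 / L"] conjI allI impI)
    show "min d1 d2 / L > 0" using d1 d2 L by simp
    fix s h :: real assume s: "\<bar>s\<bar> < min d1 d2 / L" and h: "\<bar>h\<bar> \<le> \<bar>s\<bar>"
    define y where "y = x + s *\<^sub>R w + h *\<^sub>R n"
    have "norm (y - x) \<le> \<bar>s\<bar> * norm w + \<bar>h\<bar> * norm n"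
      unfolding y_def using norm_triangle_ineq[of "s *\<^sub>R w" "h *\<^sub>R n"] by simp
    also have "\<dots> \<le> \<bar>s\<bar> * L"
      using mult_right_mono[OF h norm_ge_zero[of n]] by (simp add: L_def algebra_simps)
    finally have ny: "norm (y - x) \<le> \<bar>s\<bar> * L" .
    also have "\<dots> < min d1 d2"
      using s L by (simp add: pos_less_divide_eq)
    finally have lt: "norm (y - x) < min d1 d2" .
    then have "y \<in> ball x d2"
      by (simp add: dist_norm norm_minus_commute)
    then show "x + s *\<^sub>R w + h *\<^sub>R n \<in> U"
      using d2(2) y_def by blast
    have "inner n (y - x) = h * inner n n"
      using \<open>inner n w = 0\<close> by (simp add: y_def inner_add_right)
    then have "\<bar>g y - g x - h * inner n n\<bar> \<le> (\<epsilon> / L) * norm (y - x)"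
      using d1(2) lt by auto
    also have "\<dots> \<le> (\<epsilon> / L) * (\<bar>s\<bar> * L)"
      using ny \<open>\<epsilon> > 0\<close> L by (intro mult_left_mono) auto
    finally show "\<bar>g (x + s *\<^sub>R w + h *\<^sub>R n) - g x - h * inner n n\<bar> \<le> \<epsilon> * \<bar>s\<bar>"
      using L by (simp add: y_def)
  qed
qed

lemma IVT_on_line:
  fixes g :: "'a::real_normed_vector \<Rightarrow> real"
  assumes "continuous_on U g" "\<forall>h\<in>{-r..r}. p + h *\<^sub>R n \<in> U"
    and "g (p - r *\<^sub>R n) \<le> 0" "0 \<le> g (p + r *\<^sub>R n)" "0 \<le> r"
  shows "\<exists>h\<in>{-r..r}. g (p + h *\<^sub>R n) = 0"
proof -
  have "continuous_on {-r..r} (\<lambda>h. g (p + h *\<^sub>R n))"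
    by (rule continuous_on_compose2[OF assms(1)]) (use assms(2) in \<open>auto intro!: continuous_intros\<close>)
  then show ?thesis
    using IVT'[of "\<lambda>h. g (p + h *\<^sub>R n)" "-r" 0 r] assms(3-5) by auto
qed

lemma exists_zero_on_normal_segment:
  fixes g :: "'a::real_normed_vector \<Rightarrow> real"
  assumes "continuous_on U g" "N > 0"
    and near: "\<And>h. \<bar>h\<bar> \<le> \<bar>s\<bar> \<Longrightarrow>
      x + s *\<^sub>R w + h *\<^sub>R n \<in> U \<and> \<bar>g (x + s *\<^sub>R w + h *\<^sub>R n) - h * N\<bar> \<le> N / 2 * \<bar>s\<bar>"
  shows "\<exists>h. \<bar>h\<bar> \<le> \<bar>s\<bar> \<and> g (x + s *\<^sub>R w + h *\<^sub>R n) = 0"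
proof -
  \<comment> \<open>The term h * N dominates the error, so g changes sign along the segment.\<close>
  have "0 \<le> \<bar>s\<bar> * N" using assms(2) by simp
  moreover have "\<bar>g (x + s *\<^sub>R w - \<bar>s\<bar> *\<^sub>R n) + \<bar>s\<bar> * N\<bar> \<le> N / 2 * \<bar>s\<bar>"
    "\<bar>g (x + s *\<^sub>R w + \<bar>s\<bar> *\<^sub>R n) - \<bar>s\<bar> * N\<bar> \<le> N / 2 * \<bar>s\<bar>"
    using near[of "- \<bar>s\<bar>"] near[of "\<bar>s\<bar>"] by simp_all
  ultimately have "g (x + s *\<^sub>R w - \<bar>s\<bar> *\<^sub>R n) \<le> 0" "0 \<le> g (x + s *\<^sub>R w + \<bar>s\<bar> *\<^sub>R n)"
    unfolding abs_le_iff mult.commute[of "N / 2"] by simp_all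
  moreover have "\<forall>h\<in>{-\<bar>s\<bar>..\<bar>s\<bar>}. x + s *\<^sub>R w + h *\<^sub>R n \<in> U"
    using near by auto
  ultimately show ?thesis
    using IVT_on_line[OF assms(1), of "\<bar>s\<bar>" "x + s *\<^sub>R w" n] by (auto simp: abs_le_iff)
qed

lemma has_real_derivative_zero_if_little_o:
  fixes h :: "real \<Rightarrow> real"
  assumes "h 0 = 0" "\<And>\<epsilon>. \<epsilon> > 0 \<Longrightarrow> \<exists>d>0. \<forall>s. \<bar>s\<bar> < d \<longrightarrow> \<bar>h s\<bar> \<le> \<epsilon> * \<bar>s\<bar>"
  shows "(h has_real_derivative 0) (at 0)"
  unfolding has_field_derivative_def has_derivative_at_alt
  using assms by (simp add: bounded_linear_mult_right)

lemma tangent_space_zero_set: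
  fixes g :: "'a::real_inner \<Rightarrow> real"
  assumes U: "open U" "x \<in> U"
    and dg: "\<forall>z\<in>U. (g has_derivative (\<lambda>h. inner (grad z) h)) (at z)"
    and gx: "g x = 0" and n0: "grad x \<noteq> 0" and w: "inner (grad x) w = 0"
  shows "w \<in> tangent_space {z\<in>U. g z = 0} x"
proof -
  define n where "n = grad x"
  define N where "N = inner n n"
  have N: "N > 0" using n0 by (simp add: N_def n_def)
  have expansion: "\<exists>d>0. \<forall>s h. \<bar>s\<bar> < d \<longrightarrow> \<bar>h\<bar> \<le> \<bar>s\<bar> \<longrightarrow>
      x + s *\<^sub>R w + h *\<^sub>R n \<in> U \<and> \<bar>g (x + s *\<^sub>R w + h *\<^sub>R n) - h * N\<bar> \<le> \<epsilon> * \<bar>s\<bar>"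
    if "\<epsilon> > 0" for \<epsilon>
    using first_order_expansion_normal_tangent[OF dg[rule_format, OF U(2)] w U that] gx
    unfolding n_def N_def by simp
  obtain e where e: "e > 0" "\<forall>s h. \<bar>s\<bar> < e \<longrightarrow> \<bar>h\<bar> \<le> \<bar>s\<bar> \<longrightarrow>
      x + s *\<^sub>R w + h *\<^sub>R n \<in> U \<and> \<bar>g (x + s *\<^sub>R w + h *\<^sub>R n) - h * N\<bar> \<le> (N / 2) * \<bar>s\<bar>"
    using expansion[of "N / 2"] N by auto
  have "continuous_on U g"
    using dg has_derivative_continuous continuous_at_imp_continuous_on by blast
  have "\<exists>h. \<bar>h\<bar> \<le> \<bar>s\<bar> \<and> g (x + s *\<^sub>R w + h *\<^sub>R n) = 0" if "\<bar>s\<bar> < e" for s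
    by (rule exists_zero_on_normal_segment[OF \<open>continuous_on U g\<close> N]) (use e(2) that in blast)
  then obtain hh where hh: "\<And>s. \<bar>s\<bar> < e \<Longrightarrow> \<bar>hh s\<bar> \<le> \<bar>s\<bar> \<and> g (x + s *\<^sub>R w + hh s *\<^sub>R n) = 0"
    by metis
  have hh0: "hh 0 = 0" using hh[of 0] e(1) by simp
  have "\<exists>d>0. \<forall>s. \<bar>s\<bar> < d \<longrightarrow> \<bar>hh s\<bar> \<le> \<epsilon> * \<bar>s\<bar>" if "\<epsilon> > 0" for \<epsilon>
  proof -
    have "\<epsilon> * N > 0" using N that by simp
    then obtain d where d: "d > 0" "\<forall>s h. \<bar>s\<bar> < d \<longrightarrow> \<bar>h\<bar> \<le> \<bar>s\<bar> \<longrightarrow>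
        x + s *\<^sub>R w + h *\<^sub>R n \<in> U \<and> \<bar>g (x + s *\<^sub>R w + h *\<^sub>R n) - h * N\<bar> \<le> (\<epsilon> * N) * \<bar>s\<bar>"
      using expansion by blast
    have "\<bar>hh s\<bar> \<le> \<epsilon> * \<bar>s\<bar>" if "\<bar>s\<bar> < min d e" for s
    proof -
      have "\<bar>hh s\<bar> \<le> \<bar>s\<bar>" "g (x + s *\<^sub>R w + hh s *\<^sub>R n) = 0"
        using hh that by auto
      then have "\<bar>hh s * N\<bar> \<le> (\<epsilon> * N) * \<bar>s\<bar>"
        using d(2) that by force
      then have "\<bar>hh s\<bar> * N \<le> (\<epsilon> * \<bar>s\<bar>) * N"
        using N by (simp add: abs_mult algebra_simps)
      then show ?thesis using N by simp
    qed
    then show ?thesis using d(1) e(1) by (intro exI[of _ "min d e"]) auto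
  qed
  then have "(hh has_real_derivative 0) (at 0)"
    using hh0 by (rule has_real_derivative_zero_if_little_o[rotated])
  then have "((\<lambda>s. x + s *\<^sub>R w + hh s *\<^sub>R n) has_vector_derivative w) (at 0)"
    using hh0 by (auto intro!: derivative_eq_intros)
  moreover have "(\<lambda>s. x + s *\<^sub>R w + hh s *\<^sub>R n) ` {-e<..<e} \<subseteq> {z\<in>U. g z = 0}"
    using hh e(2) by (force simp: abs_less_iff)
  ultimately show ?thesis
    unfolding tangent_space_def using e(1) hh0 by force
qed

lemma frontier_sublevel_zero:
  fixes g :: "'a::topological_space \<Rightarrow> real"
  assumes "closed X" "open U" "X \<inter> U = {z\<in>U. g z \<le> 0}" "continuous_on U g"
    and "x \<in> frontier X" "x \<in> U"
  shows "g x = 0"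
proof (rule ccontr)
  assume "g x \<noteq> 0"
  moreover have "x \<in> X \<inter> U"
    using assms(1,5,6) frontier_subset_closed by blast
  then have "g x \<le> 0"
    using assms(3) by simp
  moreover obtain A where "open A" "A \<inter> U = {z\<in>U. g z < 0}"
    using open_Collect_less_Int[OF assms(4) continuous_on_const] by blast
  ultimately have "x \<in> A \<inter> U" "A \<inter> U \<subseteq> X"
    using assms(3,6) by auto
  then have "x \<in> interior X"
    using \<open>open A\<close> assms(2) by (meson interiorI open_Int)
  then show False
    using assms(5) by (simp add: frontier_def)
qed

lemma zero_set_subset_frontier:
  fixes g :: "'a::real_inner \<Rightarrow> real"
  assumes "closed X" "open U" and X: "X \<inter> U = {z\<in>U. g z \<le> 0}"
    and dg: "\<forall>z\<in>U. (g has_derivative (\<lambda>h. inner (grad z) h)) (at z)"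
    and "\<forall>z\<in>U. grad z \<noteq> 0"
  shows "{z\<in>U. g z = 0} \<subseteq> frontier X"
proof
  fix z assume z: "z \<in> {z\<in>U. g z = 0}"
  have "z \<notin> interior X"
  proof
    assume "z \<in> interior X"
    \<comment> \<open>z would be an interior maximum of g, so the gradient at z would vanish.\<close>
    then have "z \<in> interior X \<inter> U" "open (interior X \<inter> U)"
      using z assms(2) by auto
    moreover have "g y \<le> g z" if "y \<in> interior X \<inter> U" for y
    proof -
      have "y \<in> X \<inter> U" using that interior_subset by blast
      then show ?thesis using z unfolding X by simp
    qed
    ultimately have "(\<lambda>h. inner (grad z) h) = (\<lambda>h. 0)"
      using differential_zero_maxmin[of z "interior X \<inter> U" g] dg z by blast
    then have "inner (grad z) (grad z) = 0"
      by metis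
    then show False
      using assms(5) z by simp
  qed
  moreover have "z \<in> X \<inter> U"
    using z unfolding X by simp
  ultimately show "z \<in> frontier X"
    using assms(1) by (simp add: frontier_def)
qed

lemma C2_boundary_normal:
  fixes X :: "'a::euclidean_space set"
  assumes "closed X" "C2_boundary X" "x \<in> frontier X"
  obtains n where "n \<noteq> 0" "\<And>w. inner n w = 0 \<Longrightarrow> w \<in> tangent_space (frontier X) x"
proof -
  obtain U g grad where U: "open U" "x \<in> U" "X \<inter> U = {z\<in>U. g z \<le> (0::real)}"
    and dg: "\<forall>z\<in>U. (g has_derivative (\<lambda>h. inner (grad z) h)) (at z)"
    and grad: "\<forall>z\<in>U. grad z \<noteq> 0"
    using assms(2)[unfolded C2_boundary_def, rule_format, OF assms(3)] by blast
  have "continuous_on U g"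
    using dg has_derivative_continuous continuous_at_imp_continuous_on by blast
  then have "g x = 0"
    using frontier_sublevel_zero[OF assms(1) U(1,3) _ assms(3) U(2)] by blast
  then have "w \<in> tangent_space {z\<in>U. g z = 0} x" if "inner (grad x) w = 0" for w
    using tangent_space_zero_set[OF U(1,2) dg] grad U(2) that by blast
  moreover have "tangent_space {z\<in>U. g z = 0} x \<subseteq> tangent_space (frontier X) x"
    using tangent_space_mono zero_set_subset_frontier[OF assms(1) U(1,3) dg grad] .
  ultimately show ?thesis
    using that[of "grad x"] grad U(2) by blast
qed

section \<open>Supporting functionals and the polar map\<close>

lemma C2_boundary_orthogonal_tangent_parallel:
  fixes X :: "'a::euclidean_space set"
  assumes "closed X" "C2_boundary X" "x \<in> frontier X" "a \<noteq> 0"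
    and "\<forall>w\<in>tangent_space (frontier X) x. inner a w = 0"
    and "\<forall>w\<in>tangent_space (frontier X) x. inner b w = 0"
  shows "\<exists>c. b = c *\<^sub>R a"
proof -
  obtain n where n: "n \<noteq> 0" "\<And>w. inner n w = 0 \<Longrightarrow> w \<in> tangent_space (frontier X) x"
    using C2_boundary_normal[OF assms(1-3)] by blast
  obtain ca where "a = ca *\<^sub>R n"
    using orthogonal_complement_subset_imp_parallel[OF n(1)] n(2) assms(5) by blast
  moreover obtain cb where "b = cb *\<^sub>R n"
    using orthogonal_complement_subset_imp_parallel[OF n(1)] n(2) assms(6) by blast
  moreover have "ca \<noteq> 0"
    using \<open>a = ca *\<^sub>R n\<close> assms(4) by auto
  ultimately show ?thesis
    by (intro exI[of _ "cb / ca"]) simp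
qed

lemma symp_polar_contact_orthogonal_tangent:
  assumes "closed X" "p \<in> frontier X" "q \<in> symp_polar X" "symp_form p q = 1"
    and "w \<in> tangent_space (frontier X) p"
  shows "inner (cJ q) w = 0"
proof -
  have "\<forall>z\<in>X. inner (- cJ q) z \<le> inner (- cJ q) p"
    using assms(3,4) unfolding symp_polar_def inner_uminus_cJ by simp
  then have "inner (- cJ q) w = 0"
    using tangent_space_orthogonal_support[OF assms(5)] frontier_subset_closed[OF assms(1)] by blast
  then show ?thesis
    by simp
qed

lemma symp_polar_contact_unique:
  fixes X :: "(complex ^ 'n) set"
  assumes "closed X" "C2_boundary X" "x \<in> frontier X"
    and "y \<in> symp_polar X" "symp_form x y = 1" "y' \<in> symp_polar X" "symp_form x y' = 1"
  shows "y' = y"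
proof -
  have "cJ y \<noteq> 0"
    using assms(5) by auto
  then obtain c where c: "cJ y' = c *\<^sub>R cJ y"
    using C2_boundary_orthogonal_tangent_parallel[OF assms(1-3)]
      symp_polar_contact_orthogonal_tangent[OF assms(1,3,4,5)]
      symp_polar_contact_orthogonal_tangent[OF assms(1,3,6,7)] by blast
  then have "symp_form x y' = c * symp_form x y"
    by (metis inner_uminus_cJ inner_scaleR_left scaleR_minus_right)
  then have "c = 1"
    using assms(5,7) by simp
  then show ?thesis
    using c by simp
qed

lemma char_line_symp_polar_contact:
  fixes X :: "(complex ^ 'n) set"
  assumes "closed X" "C2_boundary X" "p \<in> frontier X"
    and "q \<in> symp_polar X" "symp_form p q = 1" "v \<in> char_line (frontier X) p"
  shows "v = symp_form p v *\<^sub>R q"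
proof -
  have "cJ q \<noteq> 0"
    using assms(5) by auto
  moreover have "\<forall>w\<in>tangent_space (frontier X) p. inner (cJ v) w = 0"
    using assms(6) by (simp add: char_line_def symp_form_def)
  ultimately obtain c where "cJ v = c *\<^sub>R cJ q"
    using C2_boundary_orthogonal_tangent_parallel[OF assms(1-3)]
      symp_polar_contact_orthogonal_tangent[OF assms(1,3-5)] by blast
  then have v: "v = c *\<^sub>R q"
    by (simp add: linear_scale[OF linear_cJ, symmetric])
  then have "symp_form p v = c"
    using assms(5) by (simp add: symp_form_def)
  then show ?thesis
    using v by simp
qed

lemma exists_normalized_supporting_functional:
  fixes X :: "'a::euclidean_space set"
  assumes "convex X" "0 \<in> interior X" "x \<in> frontier X"
  shows "\<exists>u. (\<forall>z\<in>X. inner u z \<le> 1) \<and> inner u x = 1"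
proof -
  have "rel_interior X = interior X"
    using assms(2) rel_interior_nonempty_interior by blast
  then have "x \<in> closure X" "x \<notin> rel_interior X"
    using assms(3) by (auto simp: frontier_def)
  then obtain a where a: "a \<noteq> 0" "\<And>y. y \<in> closure X \<Longrightarrow> inner a x \<le> inner a y"
    using supporting_hyperplane_relative_frontier[OF assms(1)] by metis
  obtain r where r: "r > 0" "ball 0 r \<subseteq> X"
    using assms(2) mem_interior by blast
  \<comment> \<open>Testing against a small negative multiple of a inside the ball shows that a is negative at x.\<close>
  define q where "q = - (r / 2 / norm a) *\<^sub>R a"
  have "norm q < r"
    using r(1) a(1) by (simp add: q_def)
  then have "q \<in> X"
    using r(2) by auto
  then have "inner a x \<le> inner a q"
    using a(2) closure_subset by blast
  also have "inner a q = - (r / 2 * norm a)"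
    using a(1) by (simp add: q_def dot_square_norm power2_eq_square)
  also have "\<dots> < 0"
    using r(1) a(1) by simp
  finally have "inner a x < 0" .
  moreover have "inner a z \<ge> inner a x" if "z \<in> X" for z
    using a(2) closure_subset that by blast
  ultimately show ?thesis
    by (intro exI[of _ "(1 / inner a x) *\<^sub>R a"]) (auto simp: divide_le_eq_1_neg)
qed

lemma polar_map_frontier:
  fixes X :: "(complex ^ 'n) set"
  assumes "convex_body X" "0 \<in> interior X" "C2_boundary X" "x \<in> frontier X"
  shows "polar_map X x \<in> symp_polar X" "symp_form x (polar_map X x) = 1"
proof -
  have "closed X" "convex X"
    using assms(1) by (auto simp: convex_body_def compact_imp_closed)
  obtain u where u: "\<forall>z\<in>X. inner u z \<le> 1" "inner u x = 1"
    using exists_normalized_supporting_functional[OF \<open>convex X\<close> assms(2,4)] by blast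
  have y: "cJ u \<in> symp_polar X \<and> symp_form x (cJ u) = 1"
    using u by (simp add: symp_polar_def symp_form_def inner_commute)
  have "polar_map X x = cJ u"
    unfolding polar_map_def
  proof (rule the_equality)
    fix y' assume "y' \<in> symp_polar X \<and> symp_form x y' = 1"
    then show "y' = cJ u"
      using y symp_polar_contact_unique[OF \<open>closed X\<close> assms(3,4)] by blast
  qed (rule y)
  then show "polar_map X x \<in> symp_polar X" "symp_form x (polar_map X x) = 1"
    using y by simp_all
qed

lemma uminus_mem_symp_polar_self:
  assumes "symp_polar X = X" "x \<in> X"
  shows "- x \<in> symp_polar X"
proof -
  have "symp_form z (- x) \<le> 1" if "z \<in> X" for z
  proof -
    have "symp_form x z \<le> 1"
      using that assms unfolding symp_polar_def by blast
    then show ?thesis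
      using symp_form_antisym[of z x] by (simp add: symp_form_def)
  qed
  then show ?thesis
    by (simp add: symp_polar_def)
qed

lemma continuous_on_symp_form [continuous_intros]:
  "continuous_on S f \<Longrightarrow> continuous_on S g \<Longrightarrow> continuous_on S (\<lambda>t. symp_form (f t) (g t))"
  unfolding symp_form_def
  by (intro continuous_intros bounded_linear.continuous_on[OF linear_cJ[unfolded linear_conv_bounded_linear]])

lemma characteristic_curve_velocity:
  fixes X :: "(complex ^ 'n) set"
  assumes "closed X" "C2_boundary X" "characteristic_curve (frontier X) I c"
    and "\<And>t. t \<in> I \<Longrightarrow> q t \<in> symp_polar X \<and> symp_form (c t) (q t) = 1"
  shows "\<exists>a. continuous_on I a \<and> (\<forall>t\<in>I. (c has_vector_derivative a t *\<^sub>R q t) (at t within I))"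
proof -
  obtain c' where c: "c ` I \<subseteq> frontier X" "\<forall>t\<in>I. (c has_vector_derivative c' t) (at t within I)"
      "continuous_on I c'" "\<forall>t\<in>I. c' t \<in> char_line (frontier X) (c t)"
    using assms(3) unfolding characteristic_curve_def by blast
  have "continuous_on I c"
    using c(2) has_vector_derivative_continuous continuous_on_eq_continuous_within by blast
  then have "continuous_on I (\<lambda>t. symp_form (c t) (c' t))"
    using c(3) by (intro continuous_intros)
  moreover have "c' t = symp_form (c t) (c' t) *\<^sub>R q t" if "t \<in> I" for t
    using char_line_symp_polar_contact[OF assms(1,2)] c(1,4) assms(4) that by blast
  ultimately show ?thesis
    using c(2) by (intro exI[of _ "\<lambda>t. symp_form (c t) (c' t)"]) auto
qed

lemma characteristic_pair_linear_system:
  fixes X :: "(complex ^ 'n) set" and \<gamma> :: "real \<Rightarrow> complex ^ 'n"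
  assumes "convex_body X" "0 \<in> interior X" "symp_polar X = X" "C2_boundary X"
    and "characteristic_curve (frontier X) I \<gamma>"
    and "characteristic_curve (frontier X) I (polar_map X \<circ> \<gamma>)"
  obtains a b where "continuous_on I a" "continuous_on I b"
    "\<And>t. t \<in> I \<Longrightarrow> (\<gamma> has_vector_derivative a t *\<^sub>R (polar_map X \<circ> \<gamma>) t) (at t within I)"
    "\<And>t. t \<in> I \<Longrightarrow> ((polar_map X \<circ> \<gamma>) has_vector_derivative b t *\<^sub>R \<gamma> t) (at t within I)"
proof -
  have "closed X"
    using assms(1) by (simp add: convex_body_def compact_imp_closed)
  have \<gamma>: "\<gamma> t \<in> X" "polar_map X (\<gamma> t) \<in> symp_polar X" "symp_form (\<gamma> t) (polar_map X (\<gamma> t)) = 1"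
    if "t \<in> I" for t
  proof -
    have "\<gamma> t \<in> frontier X"
      using assms(5) that unfolding characteristic_curve_def by blast
    then show "\<gamma> t \<in> X" "polar_map X (\<gamma> t) \<in> symp_polar X" "symp_form (\<gamma> t) (polar_map X (\<gamma> t)) = 1"
      using polar_map_frontier[OF assms(1,2,4)] frontier_subset_closed[OF \<open>closed X\<close>] by blast+
  qed
  obtain a where a: "continuous_on I a"
      "\<forall>t\<in>I. (\<gamma> has_vector_derivative a t *\<^sub>R (polar_map X \<circ> \<gamma>) t) (at t within I)"
    using characteristic_curve_velocity[OF \<open>closed X\<close> assms(4,5), of "polar_map X \<circ> \<gamma>"] \<gamma>(2,3)
    by auto
  \<comment> \<open>At f(x) the roles are exchanged: self-polarity makes -x a point of the polar touching f(x).\<close>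
  have "- \<gamma> t \<in> symp_polar X \<and> symp_form ((polar_map X \<circ> \<gamma>) t) (- \<gamma> t) = 1" if "t \<in> I" for t
    using uminus_mem_symp_polar_self[OF assms(3) \<gamma>(1)[OF that]] \<gamma>(3)[OF that]
      symp_form_antisym[of "\<gamma> t" "polar_map X (\<gamma> t)"] by simp
  then obtain b where b: "continuous_on I b"
      "\<forall>t\<in>I. ((polar_map X \<circ> \<gamma>) has_vector_derivative b t *\<^sub>R - \<gamma> t) (at t within I)"
    using characteristic_curve_velocity[OF \<open>closed X\<close> assms(4,6), of "\<lambda>t. - \<gamma> t"] by blast
  show ?thesis
    using that[of a "\<lambda>t. - b t"] a b continuous_on_minus[OF b(1)] by simp
qed

section \<open>A Gronwall estimate for a coupled linear system\<close>

lemma exp_weighted_antitone: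
  fixes E D :: "real \<Rightarrow> real"
  assumes "lo \<le> hi"
    and "\<And>s. s \<in> {lo..hi} \<Longrightarrow> (E has_real_derivative D s) (at s within {lo..hi})"
    and "\<And>s. s \<in> {lo..hi} \<Longrightarrow> D s + k * E s \<le> 0"
  shows "E hi * exp (k * hi) \<le> E lo * exp (k * lo)"
proof -
  have "((\<lambda>s. E s * exp (k * s)) has_derivative (\<lambda>h. ((D s + k * E s) * exp (k * s)) * h))
      (at s within {lo..hi})" if "lo \<le> s" "s \<le> hi" for s
    using assms(2)[of s] that unfolding has_field_derivative_def[symmetric]
    by (auto intro!: derivative_eq_intros simp: algebra_simps)
  from mvt_very_simple[OF assms(1) this] obtain s where "s \<in> {lo..hi}"
      "E hi * exp (k * hi) - E lo * exp (k * lo) = ((D s + k * E s) * exp (k * s)) * (hi - lo)"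
    by blast
  moreover have "((D s + k * E s) * exp (k * s)) * (hi - lo) \<le> 0"
    using assms(1,3) \<open>s \<in> {lo..hi}\<close> by (simp add: mult_nonpos_nonneg)
  ultimately show ?thesis
    by linarith
qed

lemma gronwall_vanishing:
  fixes E D :: "real \<Rightarrow> real"
  assumes "lo \<le> hi"
    and dE: "\<And>s. s \<in> {lo..hi} \<Longrightarrow> (E has_real_derivative D s) (at s within {lo..hi})"
    and "\<And>s. s \<in> {lo..hi} \<Longrightarrow> 0 \<le> E s"
    and "\<And>s. s \<in> {lo..hi} \<Longrightarrow> \<bar>D s\<bar> \<le> K * E s"
  shows "E lo = 0 \<longleftrightarrow> E hi = 0"
proof
  assume "E lo = 0"
  have "D s + - K * E s \<le> 0" if "s \<in> {lo..hi}" for s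
    using assms(4)[OF that] unfolding abs_le_iff by linarith
  then have "E hi * exp (- K * hi) \<le> 0"
    using exp_weighted_antitone[OF assms(1) dE] \<open>E lo = 0\<close> by fastforce
  then show "E hi = 0"
    using assms(1) assms(3)[of hi] by (simp add: mult_le_0_iff)
next
  assume "E hi = 0"
  have "((\<lambda>s. - E s) has_real_derivative - D s) (at s within {lo..hi})" if "s \<in> {lo..hi}" for s
    using dE[OF that] by (rule derivative_intros)
  moreover have "- D s + K * - E s \<le> 0" if "s \<in> {lo..hi}" for s
    using assms(4)[OF that] unfolding abs_le_iff by linarith
  ultimately have "- E hi * exp (K * hi) \<le> - E lo * exp (K * lo)"
    by (rule exp_weighted_antitone[OF assms(1)])
  then have "E lo * exp (K * lo) \<le> 0"
    using \<open>E hi = 0\<close> by simp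
  then show "E lo = 0"
    using assms(1) assms(3)[of lo] by (simp add: mult_le_0_iff)
qed

lemma two_abs_inner_le: "2 * \<bar>inner p q\<bar> \<le> inner p p + inner q (q::'a::real_inner)"
proof -
  have "0 \<le> inner (p - q) (p - q)" "0 \<le> inner (p + q) (p + q)"
    by simp_all
  then show ?thesis
    by (simp add: inner_diff_left inner_diff_right inner_add_left inner_add_right inner_commute abs_le_iff)
qed

lemma coupled_linear_ode_energy_deriv:
  fixes p q :: "real \<Rightarrow> 'v::real_inner"
  assumes "(p has_vector_derivative a *\<^sub>R q t) (at t within S)"
    and "(q has_vector_derivative b *\<^sub>R p t) (at t within S)"
  shows "((\<lambda>t. inner (p t) (p t) + inner (q t) (q t)) has_real_derivative
      (a + b) * (2 * inner (p t) (q t))) (at t within S)"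
proof -
  have "((\<lambda>t. inner (p t) (p t) + inner (q t) (q t)) has_vector_derivative
      inner (p t) (a *\<^sub>R q t) + inner (a *\<^sub>R q t) (p t)
      + (inner (q t) (b *\<^sub>R p t) + inner (b *\<^sub>R p t) (q t))) (at t within S)"
    using assms
    by (intro has_vector_derivative_add bounded_bilinear.has_vector_derivative[OF bounded_bilinear_inner])
  then show ?thesis
    by (simp add: has_real_derivative_iff_has_vector_derivative inner_commute algebra_simps)
qed

lemma coupled_linear_ode_vanishing:
  fixes p q :: "real \<Rightarrow> 'v::real_inner" and a b :: "real \<Rightarrow> real"
  assumes I: "is_interval I" "t0 \<in> I" "t1 \<in> I"
    and dp: "\<And>t. t \<in> I \<Longrightarrow> (p has_vector_derivative a t *\<^sub>R q t) (at t within I)"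
    and dq: "\<And>t. t \<in> I \<Longrightarrow> (q has_vector_derivative b t *\<^sub>R p t) (at t within I)"
    and "continuous_on I a" "continuous_on I b"
    and "p t0 = 0" "q t0 = 0"
  shows "p t1 = 0 \<and> q t1 = 0"
proof -
  define E where "E t = inner (p t) (p t) + inner (q t) (q t)" for t
  define D where "D t = (a t + b t) * (2 * inner (p t) (q t))" for t
  define lo where "lo = min t0 t1"
  define hi where "hi = max t0 t1"
  have "lo \<in> I" "hi \<in> I"
    using I(2,3) by (simp_all add: lo_def hi_def min_def max_def)
  then have sub: "{lo..hi} \<subseteq> I"
    using I(1) unfolding is_interval_1 by (meson atLeastAtMost_iff subsetI)
  have "(E has_real_derivative D t) (at t within {lo..hi})" if "t \<in> {lo..hi}" for t
  proof -
    have "t \<in> I" using sub that by blast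
    then show ?thesis
      using coupled_linear_ode_energy_deriv[OF dp dq] has_field_derivative_subset[OF _ sub]
      unfolding E_def D_def by blast
  qed
  moreover obtain K where K: "\<And>t. t \<in> {lo..hi} \<Longrightarrow> \<bar>a t + b t\<bar> \<le> K"
  proof -
    have "continuous_on {lo..hi} (\<lambda>t. a t + b t)"
      using assms(6,7) sub by (intro continuous_intros) (auto intro: continuous_on_subset)
    then have "bounded ((\<lambda>t. a t + b t) ` {lo..hi})"
      by (rule compact_imp_bounded[OF compact_continuous_image[OF _ compact_Icc]])
    then show ?thesis
      using that unfolding bounded_real by blast
  qed
  moreover have "\<bar>D t\<bar> \<le> K * E t" if "t \<in> {lo..hi}" for t
  proof -
    have "\<bar>D t\<bar> = \<bar>a t + b t\<bar> * (2 * \<bar>inner (p t) (q t)\<bar>)"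
      by (simp add: D_def abs_mult)
    also have "\<dots> \<le> K * E t"
      unfolding E_def using K[OF that] two_abs_inner_le[of "p t" "q t"]
      by (intro mult_mono) (auto intro: order_trans[OF abs_ge_zero])
    finally show ?thesis .
  qed
  moreover have "E t0 = 0"
    by (simp add: E_def assms(8,9))
  moreover have "0 \<le> E t" for t
    by (simp add: E_def)
  moreover have "lo \<le> hi"
    by (simp add: lo_def hi_def)
  ultimately have "E lo = 0 \<longleftrightarrow> E hi = 0"
    by (intro gronwall_vanishing)
  moreover have "t0 = lo \<and> t1 = hi \<or> t0 = hi \<and> t1 = lo"
    by (auto simp: lo_def hi_def min_def max_def)
  ultimately have "E t1 = 0"
    using \<open>E t0 = 0\<close> by auto
  then show ?thesis
    unfolding E_def by (metis add_nonneg_eq_0_iff inner_ge_zero inner_eq_zero_iff)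
qed

lemma dim_span_symp_pair:
  fixes A B :: "complex ^ 'n"
  assumes "symp_form A B \<noteq> 0"
  shows "dim (span {A, B}) = 2"
proof -
  have "A \<noteq> B" "B \<noteq> 0"
    using assms by auto
  moreover have "A \<notin> span {B}"
    using assms by (auto simp: span_singleton symp_form_scaleR_left)
  ultimately have "independent {A, B}"
    by (simp add: independent_insert)
  then show ?thesis
    using \<open>A \<noteq> B\<close> by (simp add: dim_eq_card_independent)
qed

lemma coupled_linear_ode_planar:
  fixes p q :: "real \<Rightarrow> complex ^ 'n" and a b :: "real \<Rightarrow> real"
  assumes "is_interval I" "t0 \<in> I" "symp_form (p t0) (q t0) = 1"
    and dp: "\<And>t. t \<in> I \<Longrightarrow> (p has_vector_derivative a t *\<^sub>R q t) (at t within I)"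
    and dq: "\<And>t. t \<in> I \<Longrightarrow> (q has_vector_derivative b t *\<^sub>R p t) (at t within I)"
    and "continuous_on I a" "continuous_on I b"
  shows "p ` I \<subseteq> span {p t0, q t0} \<and> q ` I \<subseteq> span {p t0, q t0}"
proof -
  define A where "A = p t0"
  define B where "B = q t0"
  \<comment> \<open>Since symp_form A B = 1, this linear map vanishes exactly on span {A, B}.\<close>
  define Q where "Q z = z - symp_form z B *\<^sub>R A + symp_form z A *\<^sub>R B" for z
  have "linear Q"
    unfolding Q_def by (intro linearI) (simp_all add: symp_form_add_left algebra_simps)
  then have Q: "bounded_linear Q" "\<And>c z. Q (c *\<^sub>R z) = c *\<^sub>R Q z"
    by (simp_all add: linear_conv_bounded_linear linear_scale)
  have "Q A = 0" "Q B = 0"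
    using assms(3) symp_form_antisym[of B A] by (simp_all add: Q_def A_def B_def)
  have "Q (p t) = 0 \<and> Q (q t) = 0" if "t \<in> I" for t
  proof (rule coupled_linear_ode_vanishing[OF assms(1,2) that])
    fix s assume "s \<in> I"
    show "((\<lambda>t. Q (p t)) has_vector_derivative a s *\<^sub>R Q (q s)) (at s within I)"
      using bounded_linear.has_vector_derivative[OF Q(1) dp[OF \<open>s \<in> I\<close>]] by (simp add: Q(2))
    show "((\<lambda>t. Q (q t)) has_vector_derivative b s *\<^sub>R Q (p s)) (at s within I)"
      using bounded_linear.has_vector_derivative[OF Q(1) dq[OF \<open>s \<in> I\<close>]] by (simp add: Q(2))
  qed (use assms(6,7) \<open>Q A = 0\<close> \<open>Q B = 0\<close> in \<open>simp_all add: A_def B_def\<close>)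
  moreover have "z \<in> span {A, B}" if "Q z = 0" for z
  proof -
    have "z = symp_form z B *\<^sub>R A - symp_form z A *\<^sub>R B"
      using that by (simp add: Q_def algebra_simps)
    also have "\<dots> \<in> span {A, B}"
      by (intro span_diff span_scale span_base) auto
    finally show ?thesis .
  qed
  ultimately show ?thesis
    unfolding A_def B_def by blast
qed

theorem theorem4p4:
  fixes X :: "(complex ^ 'n) set" and I :: "real set" and \<gamma> :: "real \<Rightarrow> complex ^ 'n"
  assumes "convex_body X" and "0 \<in> interior X"
    and "symp_polar X = X"
    and "C2_boundary X"
    and "is_interval I"
    and "characteristic_curve (frontier X) I \<gamma>"
    and "characteristic_curve (frontier X) I (polar_map X \<circ> \<gamma>)"
  shows "\<exists>V. subspace V \<and> dim V = 2 \<and> \<gamma> ` I \<subseteq> V \<and> (polar_map X \<circ> \<gamma>) ` I \<subseteq> V"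
proof (cases "I = {}")
  case True
  have "symp_form (\<chi> k. 1) (cJ (\<chi> k. 1)) \<noteq> (0 :: real)"
    by (simp add: symp_form_cJ_self vec_eq_iff)
  then show ?thesis
    using True dim_span_symp_pair subspace_span by blast
next
  case False
  then obtain t0 where "t0 \<in> I" by blast
  then have "\<gamma> t0 \<in> frontier X"
    using assms(6) unfolding characteristic_curve_def by blast
  then have \<omega>: "symp_form (\<gamma> t0) ((polar_map X \<circ> \<gamma>) t0) = 1"
    using polar_map_frontier[OF assms(1,2,4)] by simp
  obtain a b where "continuous_on I a" "continuous_on I b"
    "\<And>t. t \<in> I \<Longrightarrow> (\<gamma> has_vector_derivative a t *\<^sub>R (polar_map X \<circ> \<gamma>) t) (at t within I)"
    "\<And>t. t \<in> I \<Longrightarrow> ((polar_map X \<circ> \<gamma>) has_vector_derivative b t *\<^sub>R \<gamma> t) (at t within I)"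
    using characteristic_pair_linear_system[OF assms(1-4,6,7)] by blast
  then have "\<gamma> ` I \<subseteq> span {\<gamma> t0, (polar_map X \<circ> \<gamma>) t0}
      \<and> (polar_map X \<circ> \<gamma>) ` I \<subseteq> span {\<gamma> t0, (polar_map X \<circ> \<gamma>) t0}"
    using coupled_linear_ode_planar[where p = \<gamma> and q = "polar_map X \<circ> \<gamma>", OF assms(5) \<open>t0 \<in> I\<close> \<omega>]
    by blast
  moreover have "dim (span {\<gamma> t0, (polar_map X \<circ> \<gamma>) t0}) = 2"
    using \<omega> by (intro dim_span_symp_pair) simp
  ultimately show ?thesis
    using subspace_span by blast
qed

end
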